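(* Let $r\ge 0$ be fixed. There is a constant $C>0$ depending only on $r$ such that for every $n$ and every hypergraph $H\in\mathcal K_r(n)$, there exists a hypergraph $H'$ on $[n]$ with at most $C n^{r+1}$ hyperedges (i.e. $\mathcal O(n^{r+1})$) such that $H=\mathrm{cl}_r(H')$.
   Context: Hypergraphs on $V=[n]$ are identified with their hyperedge sets. $\mathcal K_r(n)$ is the class of hypergraphs $\mathcal E$ on $V$ satisfying: (R0) every $X\subseteq V$ with $|X|\le r$ is in $\mathcal E$; (R1) $A\in\mathcal E\Rightarrow V\setminus A\in\mathcal E$; (R2) $A,B\in\mathcal E$ and $|A\cap B|\ge r\Rightarrow A\cup B\in\mathcal E$. For a hypergraph $H$ on $V$, $\mathrm{cl}_r(H)$ is the intersection of all hypergraphs in $\mathcal K_r(n)$ containing $H$. *)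

theory Defs
  imports Complex_Main
begin

definition vset :: "nat \<Rightarrow> nat set" where
  "vset n = {1..n}"

definition is_hypergraph :: "nat \<Rightarrow> nat set set \<Rightarrow> bool" where
  "is_hypergraph n E \<longleftrightarrow> (\<forall>A\<in>E. A \<subseteq> vset n)"

definition K_class :: "nat \<Rightarrow> nat \<Rightarrow> nat set set set" where
  "K_class r n = {E. is_hypergraph n E
      \<and> (\<forall>X. X \<subseteq> vset n \<and> card X \<le> r \<longrightarrow> X \<in> E)
      \<and> (\<forall>A\<in>E. vset n - A \<in> E)
      \<and> (\<forall>A\<in>E. \<forall>B\<in>E. card (A \<inter> B) \<ge> r \<longrightarrow> A \<union> B \<in> E)}"

definition cl :: "nat \<Rightarrow> nat \<Rightarrow> nat set set \<Rightarrow> nat set set" where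
  "cl r n H = \<Inter> {E \<in> K_class r n. H \<subseteq> E}"

end

theory Submission
  imports Defs
begin

text \<open>For an \<open>r\<close>-set \<open>U\<close>, the hyperedges avoiding \<open>U\<close> are closed under
  intersection (their complements meet in \<open>U\<close>, so (R1) and (R2) apply), hence for every
  \<open>S\<close> there is a least hyperedge containing \<open>S\<close> and avoiding \<open>U\<close>. Now let \<open>A \<in> H\<close> with
  \<open>|A| > r\<close> and \<open>|[n] - A| > r\<close>, and pick \<open>r\<close>-sets \<open>T \<subseteq> A\<close> and \<open>U \<subseteq> [n] - A\<close>. Then \<open>A\<close> is the
  union of the least hyperedges containing \<open>T \<union> {x}\<close> and avoiding \<open>U\<close>, over \<open>x \<in> A\<close>; all of
  them contain \<open>T\<close>, so iterating (R2) recovers \<open>A\<close> from them. A priori this needs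
  \<open>O(n^(2r+1))\<close> generators, but by pigeonhole on \<open>{1..2r}\<close> one of \<open>T\<close>, \<open>U\<close> can be chosen
  inside \<open>{1..2r}\<close>, leaving only \<open>O(n^(r+1))\<close> triples \<open>(T, U, x)\<close>.\<close>

lemma finite_vset [simp]: "finite (vset n)"
  by (simp add: vset_def)

lemma K_class_subset_vset: "E \<in> K_class r n \<Longrightarrow> A \<in> E \<Longrightarrow> A \<subseteq> vset n"
  unfolding K_class_def is_hypergraph_def by auto

lemma K_class_finite: "E \<in> K_class r n \<Longrightarrow> finite E"
  using K_class_subset_vset by (metis Pow_iff finite_Pow_iff finite_subset finite_vset subsetI)

lemma K_class_small: "E \<in> K_class r n \<Longrightarrow> X \<subseteq> vset n \<Longrightarrow> card X \<le> r \<Longrightarrow> X \<in> E"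
  unfolding K_class_def by auto

lemma K_class_Diff: "E \<in> K_class r n \<Longrightarrow> A \<in> E \<Longrightarrow> vset n - A \<in> E"
  unfolding K_class_def by auto

lemma K_class_Un:
  "E \<in> K_class r n \<Longrightarrow> A \<in> E \<Longrightarrow> B \<in> E \<Longrightarrow> r \<le> card (A \<inter> B) \<Longrightarrow> A \<union> B \<in> E"
  unfolding K_class_def by auto

lemma K_class_Int:
  assumes E: "E \<in> K_class r n" and AB: "A \<in> E" "B \<in> E"
    and U: "U \<subseteq> vset n - (A \<union> B)" "r \<le> card U"
  shows "A \<inter> B \<in> E"
proof -
  have "U \<subseteq> (vset n - A) \<inter> (vset n - B)"
    using U(1) by blast
  then have "r \<le> card ((vset n - A) \<inter> (vset n - B))"
    using U(2) card_mono[of "(vset n - A) \<inter> (vset n - B)" U] by simp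
  then have "vset n - ((vset n - A) \<union> (vset n - B)) \<in> E"
    using E AB by (simp add: K_class_Diff K_class_Un)
  moreover have "vset n - ((vset n - A) \<union> (vset n - B)) = A \<inter> B"
    using K_class_subset_vset[OF E] AB by blast
  ultimately show ?thesis
    by simp
qed

lemma K_class_Union:
  assumes E: "E \<in> K_class r n" and F: "finite F" "F \<noteq> {}" "F \<subseteq> E"
    and T: "\<forall>X\<in>F. T \<subseteq> X" "r \<le> card T"
  shows "\<Union>F \<in> E"
  using F T(1)
proof (induction F rule: finite_ne_induct)
  case (singleton X)
  then show ?case by simp
next
  case (insert X F)
  have "T \<subseteq> X \<inter> \<Union>F"
    using insert by blast
  moreover have "X \<subseteq> vset n"
    using insert K_class_subset_vset[OF E] by simp
  then have "finite (X \<inter> \<Union>F)"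
    by (meson finite_Int finite_subset finite_vset)
  ultimately have "r \<le> card (X \<inter> \<Union>F)"
    using T(2) card_mono[of "X \<inter> \<Union>F" T] by simp
  then show ?case
    using K_class_Un[OF E] insert by simp
qed

lemma K_class_Inter:
  assumes E: "E \<in> K_class r n" and F: "finite F" "F \<noteq> {}" "F \<subseteq> E"
    and U: "\<forall>X\<in>F. X \<inter> U = {}" "U \<subseteq> vset n" "r \<le> card U"
  shows "\<Inter>F \<in> E"
  using F U(1)
proof (induction F rule: finite_ne_induct)
  case (singleton X)
  then show ?case by simp
next
  case (insert X F)
  have "U \<subseteq> vset n - (X \<union> \<Inter>F)"
    using insert U(2) by blast
  then show ?case
    using K_class_Int[OF E] insert U(3) by simp
qed

lemma cl_eqI:
  assumes "H \<in> K_class r n" "G \<subseteq> H"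
    and "\<And>E A. E \<in> K_class r n \<Longrightarrow> G \<subseteq> E \<Longrightarrow> A \<in> H \<Longrightarrow> A \<in> E"
  shows "H = cl r n G"
  using assms unfolding cl_def by blast

definition least_edge :: "nat set set \<Rightarrow> nat set \<Rightarrow> nat set \<Rightarrow> nat set" where
  "least_edge H S U = \<Inter>{B \<in> H. S \<subseteq> B \<and> B \<inter> U = {}}"

lemma least_edge:
  assumes H: "H \<in> K_class r n" and A: "A \<in> H" "S \<subseteq> A" "A \<inter> U = {}"
    and U: "U \<subseteq> vset n" "r \<le> card U"
  shows "least_edge H S U \<in> H" "S \<subseteq> least_edge H S U" "least_edge H S U \<subseteq> A"
proof -
  let ?F = "{B \<in> H. S \<subseteq> B \<and> B \<inter> U = {}}"
  have "finite ?F" "?F \<noteq> {}"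
    using K_class_finite[OF H] A by auto
  then show "least_edge H S U \<in> H"
    unfolding least_edge_def using K_class_Inter[OF H _ _ _ _ U] by blast
  show "S \<subseteq> least_edge H S U" "least_edge H S U \<subseteq> A"
    unfolding least_edge_def using A by auto
qed

lemma Union_least_edges:
  assumes "H \<in> K_class r n" "A \<in> H" "T \<subseteq> A" "A \<inter> U = {}" "U \<subseteq> vset n" "r \<le> card U"
  shows "(\<Union>x\<in>A. least_edge H (insert x T) U) = A"
proof -
  have "insert x T \<subseteq> least_edge H (insert x T) U" "least_edge H (insert x T) U \<subseteq> A"
    if "x \<in> A" for x
  proof -
    have "insert x T \<subseteq> A"
      using assms(3) that by simp
    then show "insert x T \<subseteq> least_edge H (insert x T) U" "least_edge H (insert x T) U \<subseteq> A"
      by (rule least_edge(2,3)[OF assms(1,2) _ assms(4-6)])+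
  qed
  then show ?thesis
    by blast
qed

lemma obtain_separating_pair:
  assumes A: "A \<subseteq> vset n" "r \<le> card A" "r \<le> card (vset n - A)"
  obtains T U where "T \<subseteq> A" "U \<subseteq> vset n - A" "card T = r" "card U = r"
    "T \<subseteq> {1..2*r} \<or> U \<subseteq> {1..2*r}"
proof (cases "2 * r \<le> n")
  case True
  let ?I = "{1..2*r}"
  have "?I \<subseteq> vset n"
    using True by (auto simp: vset_def)
  then have "?I = (A \<inter> ?I) \<union> ((vset n - A) \<inter> ?I)"
    by blast
  then have "card ?I = card (A \<inter> ?I) + card ((vset n - A) \<inter> ?I)"
    using card_Un_disjoint[of "A \<inter> ?I" "(vset n - A) \<inter> ?I"] by auto
  then have "2 * r = card (A \<inter> ?I) + card ((vset n - A) \<inter> ?I)"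
    by simp
  then consider "r \<le> card (A \<inter> ?I)" | "r \<le> card ((vset n - A) \<inter> ?I)"
    by linarith
  then show ?thesis
  proof cases
    case 1
    obtain T where "T \<subseteq> A \<inter> ?I" "card T = r"
      using 1 by (meson obtain_subset_with_card_n)
    moreover obtain U where "U \<subseteq> vset n - A" "card U = r"
      using A(3) by (meson obtain_subset_with_card_n)
    ultimately show ?thesis
      using that by blast
  next
    case 2
    obtain T where "T \<subseteq> A" "card T = r"
      using A(2) by (meson obtain_subset_with_card_n)
    moreover obtain U where "U \<subseteq> (vset n - A) \<inter> ?I" "card U = r"
      using 2 by (meson obtain_subset_with_card_n)
    ultimately show ?thesis
      using that by blast
  qed
next
  case False
  obtain T where "T \<subseteq> A" "card T = r"
    using A(2) by (meson obtain_subset_with_card_n)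
  moreover obtain U where "U \<subseteq> vset n - A" "card U = r"
    using A(3) by (meson obtain_subset_with_card_n)
  moreover have "T \<subseteq> {1..2*r}"
    using A(1) False \<open>T \<subseteq> A\<close> by (auto simp: vset_def)
  ultimately show ?thesis
    using that by blast
qed

definition anchor_triples :: "nat \<Rightarrow> nat \<Rightarrow> (nat set \<times> nat set \<times> nat) set" where
  "anchor_triples r n = {(T, U, x). T \<subseteq> vset n \<and> card T = r \<and> U \<subseteq> vset n \<and> card U = r
      \<and> x \<in> vset n \<and> (T \<subseteq> {1..2*r} \<or> U \<subseteq> {1..2*r})}"

lemma binomial_mult_le_pow: "(n choose r) * n \<le> n ^ (r + 1)"
  using binomial_le_pow[of r n] by (cases "r \<le> n") (auto simp: binomial_eq_0)

lemma card_anchor_triples: "card (anchor_triples r n) \<le> 2 * 4 ^ r * n ^ (r + 1)"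
proof -
  let ?S = "{U. U \<subseteq> vset n \<and> card U = r}" and ?P = "Pow {1..2*r}"
  have "anchor_triples r n \<subseteq> ?P \<times> ?S \<times> vset n \<union> ?S \<times> ?P \<times> vset n"
    unfolding anchor_triples_def by auto
  then have "card (anchor_triples r n) \<le> card (?P \<times> ?S \<times> vset n \<union> ?S \<times> ?P \<times> vset n)"
    by (rule card_mono[rotated]) simp
  also have "\<dots> \<le> card (?P \<times> ?S \<times> vset n) + card (?S \<times> ?P \<times> vset n)"
    by (rule card_Un_le)
  also have "\<dots> = 2 * 4 ^ r * ((n choose r) * n)"
    by (simp add: card_cartesian_product n_subsets card_Pow power_mult vset_def)
  also have "\<dots> \<le> 2 * 4 ^ r * n ^ (r + 1)"
    using binomial_mult_le_pow by simp
  finally show ?thesis .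
qed

definition least_edges :: "nat \<Rightarrow> nat \<Rightarrow> nat set set \<Rightarrow> nat set set" where
  "least_edges r n H = H \<inter> (\<lambda>(T, U, x). least_edge H (insert x T) U) ` anchor_triples r n"

lemma card_least_edges: "card (least_edges r n H) \<le> 2 * 4 ^ r * n ^ (r + 1)"
proof -
  have "finite (anchor_triples r n)"
    by (rule finite_subset[of _ "Pow (vset n) \<times> Pow (vset n) \<times> vset n"])
      (auto simp: anchor_triples_def)
  then have "card (least_edges r n H) \<le> card (anchor_triples r n)"
    unfolding least_edges_def by (meson card_image_le card_mono finite_imageI inf_le2 le_trans)
  then show ?thesis
    using card_anchor_triples by (rule le_trans)
qed

lemma least_edge_in_least_edges:
  assumes "(T, U, x) \<in> anchor_triples r n" "least_edge H (insert x T) U \<in> H"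
  shows "least_edge H (insert x T) U \<in> least_edges r n H"
proof -
  have "least_edge H (insert x T) U \<in> (\<lambda>(T, U, x). least_edge H (insert x T) U) ` anchor_triples r n"
    using assms(1) by (rule rev_image_eqI) simp
  then show ?thesis
    unfolding least_edges_def using assms(2) by blast
qed

lemma least_edges_generate_large:
  assumes H: "H \<in> K_class r n" and E: "E \<in> K_class r n" "least_edges r n H \<subseteq> E"
    and A: "A \<in> H" "r < card A" "r < card (vset n - A)"
  shows "A \<in> E"
proof -
  have AV: "A \<subseteq> vset n"
    using K_class_subset_vset[OF H A(1)] .
  obtain T U where TU: "T \<subseteq> A" "U \<subseteq> vset n - A" "card T = r" "card U = r"
    "T \<subseteq> {1..2*r} \<or> U \<subseteq> {1..2*r}"
    using obtain_separating_pair[OF AV less_imp_le[OF A(2)] less_imp_le[OF A(3)]] .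
  have disj: "A \<inter> U = {}" and UV: "U \<subseteq> vset n" and rU: "r \<le> card U"
    using TU(2,4) by auto
  have edge: "least_edge H (insert x T) U \<in> H" "T \<subseteq> least_edge H (insert x T) U"
    if "x \<in> A" for x
  proof -
    have xT: "insert x T \<subseteq> A"
      using that TU(1) by simp
    show "least_edge H (insert x T) U \<in> H" "T \<subseteq> least_edge H (insert x T) U"
      using least_edge(1,2)[OF H A(1) xT disj UV rU] by simp_all
  qed
  define F where "F = (\<lambda>x. least_edge H (insert x T) U) ` A"
  have "(T, U, x) \<in> anchor_triples r n" if "x \<in> A" for x
    using TU that AV unfolding anchor_triples_def by auto
  then have "least_edge H (insert x T) U \<in> least_edges r n H" if "x \<in> A" for x
    using least_edge_in_least_edges edge(1) that by blast
  then have "F \<subseteq> least_edges r n H"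
    unfolding F_def by blast
  then have "F \<subseteq> E"
    using E(2) by (rule order_trans)
  moreover have "\<forall>B\<in>F. T \<subseteq> B"
    unfolding F_def using edge(2) by blast
  moreover have "finite F" "F \<noteq> {}"
    unfolding F_def using finite_subset[OF AV finite_vset] A(2) by auto
  ultimately have "\<Union>F \<in> E"
    using K_class_Union[OF E(1)] TU(3) by simp
  then show ?thesis
    unfolding F_def using Union_least_edges[OF H A(1) TU(1) disj UV rU] by simp
qed

lemma least_edges_generate:
  assumes H: "H \<in> K_class r n" and E: "E \<in> K_class r n" "least_edges r n H \<subseteq> E"
    and A: "A \<in> H"
  shows "A \<in> E"
proof -
  have AV: "A \<subseteq> vset n"
    using K_class_subset_vset[OF H A] .
  consider "card A \<le> r" | "card (vset n - A) \<le> r" | "r < card A" "r < card (vset n - A)"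
    by linarith
  then show ?thesis
  proof cases
    case 1
    then show ?thesis
      using K_class_small[OF E(1) AV] by simp
  next
    case 2
    then have "vset n - (vset n - A) \<in> E"
      by (intro K_class_Diff[OF E(1)] K_class_small[OF E(1)]) simp_all
    then show ?thesis
      using AV by (simp add: double_diff)
  next
    case 3
    then show ?thesis
      using least_edges_generate_large[OF H E A] by simp
  qed
qed

theorem mainTheorem12:
  fixes r :: nat
  shows "\<exists>C::real. C > 0 \<and>
    (\<forall>n::nat. \<forall>H \<in> K_class r n. \<exists>H'. is_hypergraph n H'
        \<and> real (card H') \<le> C * real n ^ (r + 1)
        \<and> H = cl r n H')"
proof (intro exI[of _ "2 * 4 ^ r"] conjI allI ballI)
  fix n H
  assume H: "H \<in> K_class r n"
  have sub: "least_edges r n H \<subseteq> H"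
    unfolding least_edges_def by blast
  then have "is_hypergraph n (least_edges r n H)"
    using K_class_subset_vset[OF H] unfolding is_hypergraph_def by blast
  moreover have "real (card (least_edges r n H)) \<le> 2 * 4 ^ r * real n ^ (r + 1)"
    using of_nat_mono[OF card_least_edges[of r n H], where 'a=real] by simp
  moreover have "H = cl r n (least_edges r n H)"
    using cl_eqI[OF H sub] least_edges_generate[OF H] by blast
  ultimately show "\<exists>H'. is_hypergraph n H' \<and> real (card H') \<le> 2 * 4 ^ r * real n ^ (r + 1)
      \<and> H = cl r n H'"
    by blast
qed simp

end
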